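(* Let $G$ be a finite group with a fixed supercharacter theory and let $\iota,\alpha,\beta\in\mathrm{scf}(G)$ satisfy $\langle\iota,\alpha\rangle=\langle\iota,\beta\rangle=1$. Then the Hopf algebra $\mathcal{H}_{(\iota,\alpha,\beta)}$ is free as an algebra.
   Context: Supercharacter theory: set partition $\mathtt{Cl}$ of $G$ and pairwise orthogonal characters $\mathtt{Ch}$ forming a basis of $\mathrm{scf}(G)=\{\psi:G\to\mathbb{C}$ constant on blocks of $\mathtt{Cl}\}$, with $\mathbf{reg}\in\mathrm{scf}(G)$, $\mathbb{1}\in\mathtt{Ch}$; $\langle\psi,\gamma\rangle=|G|^{-1}\sum_g\psi(g)\overline{\gamma(g)}$. For $n\ge1$, $G^{n-1}=G\times\cdots\times G\times\{1\}$ ($n-1$ copies of $G$), and $\mathrm{scf}(G^{n-1})$ is spanned by $\psi_1\otimes\cdots\otimes\psi_{n-1}\otimes\chi^{()}:(g_1,\dots,g_{n-1},1)\mapsto\prod\psi_j(g_j)$, $\psi_j\in\mathrm{scf}(G)$ ($\chi^{()}$ the trivial character of the trivial group; $\mathrm{scf}(G^{n-1})\cong\mathrm{scf}(G)^{\otimes(n-1)}$); $\mathrm{scf}(G^{-1}):=\mathbb{C}\chi^\emptyset$. $\mathcal{H}_{(\iota,\alpha,\beta)}=\bigoplus_{n\ge0}\mathrm{scf}(G^{n-1})$ (degree $n$ part $\mathrm{scf}(G^{n-1})$), a graded connected Hopf algebra with unit $\chi^\emptyset$, product $(\gamma_1\otimes\cdots\otimes\gamma_{m-1}\otimes\chi^{()})\cdot(\psi_1\otimes\cdots\otimes\psi_{n-1}\otimes\chi^{()})=\gamma_1\otimes\cdots\otimes\gamma_{m-1}\otimes\iota\otimes\psi_1\otimes\cdots\otimes\psi_{n-1}\otimes\chi^{()}$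 (extended bilinearly), and coproduct $\Delta(\psi)=\sum_{A\subseteq[n]}\psi^{A}\otimes\psi^{[n]\setminus A}$ for $\psi=\psi_1\otimes\cdots\otimes\psi_{n-1}\otimes\chi^{()}$, where $\psi^\emptyset=\chi^\emptyset$; for nonempty $A=\{a_1<\dots<a_k\}$, $\psi^{A}=\lambda_A\, x_{a_1}\otimes\cdots\otimes x_{a_{k-1}}\otimes\chi^{()}$ with $x_{a_i}=\psi_{a_i}$ if $a_{i+1}=a_i+1$ and $x_{a_i}=\langle\psi_{a_i},\alpha\rangle\iota$ otherwise, and $\lambda_A=\langle\psi_{a_k},\alpha\rangle$ if $a_k<n$, $\lambda_A=1$ if $a_k=n$; $\psi^{[n]\setminus A}$ is defined the same way for the set $[n]\setminus A$ but with $\beta$ in place of $\alpha$. *)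

theory Defs
  imports "HOL-Algebra.Group" "Jordan_Normal_Form.Matrix"
begin

(* All class functions G -> C are represented as functions 'g => complex vanishing
   outside carrier G. *)

definition mat_trace :: "complex mat \<Rightarrow> complex" where
  "mat_trace A = (\<Sum>i<dim_row A. A $$ (i, i))"

definition is_character :: "('g, 'b) monoid_scheme \<Rightarrow> ('g \<Rightarrow> complex) \<Rightarrow> bool" where
  "is_character G \<chi> \<longleftrightarrow>
     (\<forall>x. x \<notin> carrier G \<longrightarrow> \<chi> x = 0) \<and>
     (\<exists>(d::nat) (\<rho>::'g \<Rightarrow> complex mat). d > 0 \<and>
        (\<forall>g\<in>carrier G. \<rho> g \<in> carrier_mat d d) \<and>
        \<rho> \<one>\<^bsub>G\<^esub> = 1\<^sub>m d \<and>
        (\<forall>g\<in>carrier G. \<forall>h\<in>carrier G. \<rho> (g \<otimes>\<^bsub>G\<^esub> h) = \<rho> g * \<rho> h) \<and>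
        (\<forall>g\<in>carrier G. \<chi> g = mat_trace (\<rho> g)))"

definition cinner :: "('g, 'b) monoid_scheme \<Rightarrow> ('g \<Rightarrow> complex) \<Rightarrow> ('g \<Rightarrow> complex) \<Rightarrow> complex" where
  "cinner G \<psi> \<gamma> = (\<Sum>g\<in>carrier G. \<psi> g * cnj (\<gamma> g)) / of_nat (card (carrier G))"

definition scf :: "('g, 'b) monoid_scheme \<Rightarrow> 'g set set \<Rightarrow> ('g \<Rightarrow> complex) set" where
  "scf G Cl = {\<psi>. (\<forall>x. x \<notin> carrier G \<longrightarrow> \<psi> x = 0) \<and>
                   (\<forall>B\<in>Cl. \<forall>x\<in>B. \<forall>y\<in>B. \<psi> x = \<psi> y)}"

definition regular_char :: "('g, 'b) monoid_scheme \<Rightarrow> 'g \<Rightarrow> complex" where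
  "regular_char G g = (if g = \<one>\<^bsub>G\<^esub> then of_nat (card (carrier G)) else 0)"

definition trivial_char :: "('g, 'b) monoid_scheme \<Rightarrow> 'g \<Rightarrow> complex" where
  "trivial_char G g = (if g \<in> carrier G then 1 else 0)"

definition fspan :: "('g \<Rightarrow> complex) set \<Rightarrow> ('g \<Rightarrow> complex) set" where
  "fspan S = {f. \<exists>T c. finite T \<and> T \<subseteq> S \<and> f = (\<lambda>x. \<Sum>t\<in>T. c t * t x)}"

definition flin_indep :: "('g \<Rightarrow> complex) set \<Rightarrow> bool" where
  "flin_indep S \<longleftrightarrow> (\<forall>T c. finite T \<and> T \<subseteq> S \<and> (\<lambda>x. \<Sum>t\<in>T. c t * t x) = (\<lambda>x. 0)
                        \<longrightarrow> (\<forall>t\<in>T. c t = 0))"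

definition supercharacter_theory ::
  "('g, 'b) monoid_scheme \<Rightarrow> 'g set set \<Rightarrow> ('g \<Rightarrow> complex) set \<Rightarrow> bool" where
  "supercharacter_theory G Cl Ch \<longleftrightarrow>
     \<comment> \<open>Cl is a set partition of G\<close>
     (\<Union>Cl = carrier G) \<and> (\<forall>B\<in>Cl. B \<noteq> {}) \<and>
     (\<forall>B\<in>Cl. \<forall>C\<in>Cl. B \<noteq> C \<longrightarrow> B \<inter> C = {}) \<and>
     \<comment> \<open>Ch: pairwise orthogonal characters forming a basis of scf(G)\<close>
     (\<forall>\<chi>\<in>Ch. is_character G \<chi>) \<and>
     (\<forall>\<chi>\<in>Ch. \<forall>\<psi>\<in>Ch. \<chi> \<noteq> \<psi> \<longrightarrow> cinner G \<chi> \<psi> = 0) \<and>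
     Ch \<subseteq> scf G Cl \<and> flin_indep Ch \<and> fspan Ch = scf G Cl \<and>
     regular_char G \<in> scf G Cl \<and> trivial_char G \<in> Ch"

(* The graded pieces.  scf(G^{k}) for k = n-1 is represented as the functions on
   words of length k over G that vanish off G^k and are constant on products
   B_1 x ... x B_k of blocks of Cl (this is scf(G)^{tensor k}).  For degree 0
   (scf(G^{-1}) = C chi^emptyset) and degree 1 (scf(G^0) = C chi^()) this is the
   one-dimensional space of functions supported on the empty word. *)
definition scf_pow :: "('g, 'b) monoid_scheme \<Rightarrow> 'g set set \<Rightarrow> nat \<Rightarrow> ('g list \<Rightarrow> complex) set" where
  "scf_pow G Cl k = {f. (\<forall>w. \<not> (length w = k \<and> set w \<subseteq> carrier G) \<longrightarrow> f w = 0) \<and>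
      (\<forall>u v. length u = k \<and> length v = k \<and> (\<forall>i<k. \<exists>B\<in>Cl. u ! i \<in> B \<and> v ! i \<in> B)
             \<longrightarrow> f u = f v)}"

type_synonym 'g helt = "nat \<Rightarrow> 'g list \<Rightarrow> complex"

(* elements of H = direct sum over n of scf(G^{n-1}); x n is the degree-n component *)
definition H_carrier :: "('g, 'b) monoid_scheme \<Rightarrow> 'g set set \<Rightarrow> 'g helt set" where
  "H_carrier G Cl = {x. finite {n. x n \<noteq> (\<lambda>w. 0)} \<and> (\<forall>n. x n \<in> scf_pow G Cl (n - 1))}"

definition hmul :: "('g \<Rightarrow> complex) \<Rightarrow> nat \<Rightarrow> nat \<Rightarrow> ('g list \<Rightarrow> complex) \<Rightarrow> ('g list \<Rightarrow> complex)
                     \<Rightarrow> ('g list \<Rightarrow> complex)" where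
  "hmul \<iota> m n f g =
     (if m = 0 then (\<lambda>w. f [] * g w)
      else if n = 0 then (\<lambda>w. f w * g [])
      else (\<lambda>w. if length w = m + n - 1
                then f (take (m - 1) w) * \<iota> (w ! (m - 1)) * g (drop m w) else 0))"

definition Hmult :: "('g \<Rightarrow> complex) \<Rightarrow> 'g helt \<Rightarrow> 'g helt \<Rightarrow> 'g helt" where
  "Hmult \<iota> x y = (\<lambda>k w. \<Sum>m\<le>k. hmul \<iota> m (k - m) (x m) (y (k - m)) w)"

definition Hunit :: "'g helt" where
  "Hunit = (\<lambda>n w. if n = 0 \<and> w = [] then 1 else 0)"

fun Hword :: "('g \<Rightarrow> complex) \<Rightarrow> 'g helt list \<Rightarrow> 'g helt" where
  "Hword \<iota> [] = Hunit"
| "Hword \<iota> (z # zs) = Hmult \<iota> z (Hword \<iota> zs)"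

definition H_free_algebra :: "('g, 'b) monoid_scheme \<Rightarrow> 'g set set \<Rightarrow> ('g \<Rightarrow> complex) \<Rightarrow> bool" where
  "H_free_algebra G Cl \<iota> \<longleftrightarrow>
     (\<exists>Z. Z \<subseteq> H_carrier G Cl \<and>
        (\<forall>W c. finite W \<and> W \<subseteq> lists Z \<and>
               (\<lambda>n w. \<Sum>ws\<in>W. c ws * Hword \<iota> ws n w) = (\<lambda>n w. 0)
               \<longrightarrow> (\<forall>ws\<in>W. c ws = 0)) \<and>
        (\<forall>x\<in>H_carrier G Cl. \<exists>W c. finite W \<and> W \<subseteq> lists Z \<and>
               x = (\<lambda>n w. \<Sum>ws\<in>W. c ws * Hword \<iota> ws n w)))"

end

(*
  Choose a block B0 of the partition on which iota does not vanish; it exists because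
  <iota, alpha> = 1.  Then iota together with the indicator functions of the other blocks is a
  basis of scf(G), so the pure tensors of these basis functions form a basis of every graded
  piece scf(G^(n-1)).  The product of two pure tensors is their concatenation with one factor
  iota inserted in between.  Hence every pure tensor factors uniquely, by cutting it at its
  iota-factors, into a product of pure tensors without a factor iota, and these iota-free pure
  tensors freely generate the algebra.
*)
theory Submission
  imports Defs "HOL-Library.Disjoint_Sets"
begin

fun tensor :: "('x \<Rightarrow> 'a \<Rightarrow> complex) \<Rightarrow> 'x list \<Rightarrow> 'a list \<Rightarrow> complex" where
  "tensor \<phi> [] [] = 1"
| "tensor \<phi> (x # xs) (a # w) = \<phi> x a * tensor \<phi> xs w"
| "tensor \<phi> [] (_ # _) = 0"
| "tensor \<phi> (_ # _) [] = 0"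

lemma tensor_eq_0_if_length_neq: "length w \<noteq> length xs \<Longrightarrow> tensor \<phi> xs w = 0"
  by (induction \<phi> xs w rule: tensor.induct) auto

lemma tensor_append:
  "tensor \<phi> (xs @ ys) w = tensor \<phi> xs (take (length xs) w) * tensor \<phi> ys (drop (length xs) w)"
proof (induction xs arbitrary: w)
  case Nil
  then show ?case by (cases w) auto
next
  case (Cons x xs)
  then show ?case by (cases w) auto
qed

lemma sum_lists_length_Suc:
  assumes "finite L"
  shows "(\<Sum>xs | set xs \<subseteq> L \<and> length xs = Suc k. g xs) =
         (\<Sum>x\<in>L. \<Sum>xs | set xs \<subseteq> L \<and> length xs = k. g (x # xs))"
proof -
  have "(\<Sum>xs | set xs \<subseteq> L \<and> length xs = Suc k. g xs) =
        (\<Sum>(xs, x) \<in> {xs. set xs \<subseteq> L \<and> length xs = k} \<times> L. g (x # xs))"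
    unfolding lists_length_Suc_eq sum.reindex[OF inj_split_Cons] by (simp add: case_prod_unfold)
  also have "\<dots> = (\<Sum>x\<in>L. \<Sum>xs | set xs \<subseteq> L \<and> length xs = k. g (x # xs))"
    using assms finite_lists_length_eq[OF assms]
    by (simp add: sum.cartesian_product[symmetric] sum.swap[of _ L])
  finally show ?thesis .
qed

lemma tensor_linear_independent:
  assumes "finite L"
    and indep: "\<forall>c. (\<forall>a. (\<Sum>x\<in>L. c x * \<phi> x a) = 0) \<longrightarrow> (\<forall>x\<in>L. c x = 0)"
    and zero: "\<And>w. (\<Sum>xs | set xs \<subseteq> L \<and> length xs = k. c xs * tensor \<phi> xs w) = 0"
    and xs: "set xs \<subseteq> L" "length xs = k"
  shows "c xs = 0"
  using zero xs
proof (induction k arbitrary: c xs)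
  case 0
  have "{xs. set xs \<subseteq> L \<and> length xs = 0} = {[]}" by auto
  then show ?case using 0(1)[of "[]"] 0(2,3) by simp
next
  case (Suc k)
  obtain x ys where xs: "xs = x # ys" "x \<in> L" "set ys \<subseteq> L" "length ys = k"
    using Suc.prems(2,3) by (cases xs) auto
  have "(\<Sum>ys | set ys \<subseteq> L \<and> length ys = k. c (x # ys) * tensor \<phi> ys u) = 0" for u
  proof -
    define s where "s y = (\<Sum>ys | set ys \<subseteq> L \<and> length ys = k. c (y # ys) * tensor \<phi> ys u)" for y
    have "(\<Sum>y\<in>L. s y * \<phi> y a) = 0" for a
      using Suc.prems(1)[of "a # u"]
      by (simp add: s_def sum_lists_length_Suc[OF \<open>finite L\<close>] sum_distrib_left sum_distrib_right mult_ac)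
    then have "\<forall>y\<in>L. s y = 0" using indep[THEN spec[of _ s]] by blast
    then show ?thesis using \<open>x \<in> L\<close> by (simp add: s_def)
  qed
  from Suc.IH[of "\<lambda>ys. c (x # ys)", OF this] xs show ?case by simp
qed

abbreviation same_block :: "'g set set \<Rightarrow> 'g \<Rightarrow> 'g \<Rightarrow> bool" where
  "same_block Cl a b \<equiv> \<exists>B\<in>Cl. a \<in> B \<and> b \<in> B"

lemma scf_vanish: "h \<in> scf G Cl \<Longrightarrow> a \<notin> carrier G \<Longrightarrow> h a = 0"
  by (simp add: scf_def)

lemma scf_eq: "h \<in> scf G Cl \<Longrightarrow> B \<in> Cl \<Longrightarrow> a \<in> B \<Longrightarrow> b \<in> B \<Longrightarrow> h a = h b"
  unfolding scf_def by blast

lemma scf_pow_vanish: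
  "f \<in> scf_pow G Cl k \<Longrightarrow> \<not> (length w = k \<and> set w \<subseteq> carrier G) \<Longrightarrow> f w = 0"
  by (simp add: scf_pow_def)

lemma scf_pow_eq:
  assumes "f \<in> scf_pow G Cl k" "length u = k"
    and "list_all2 (same_block Cl) u v"
  shows "f u = f v"
proof -
  have "length v = k" "\<forall>i<k. \<exists>B\<in>Cl. u ! i \<in> B \<and> v ! i \<in> B"
    using assms(2,3) by (auto simp: list_all2_conv_all_nth)
  then show ?thesis using assms(1,2) unfolding scf_pow_def by blast
qed

lemma scf_powI:
  assumes "\<And>w. \<not> (length w = k \<and> set w \<subseteq> carrier G) \<Longrightarrow> f w = 0"
    and "\<And>u v. length u = k \<Longrightarrow> list_all2 (same_block Cl) u v \<Longrightarrow> f u = f v"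
  shows "f \<in> scf_pow G Cl k"
  unfolding scf_pow_def
proof (intro CollectI conjI allI impI)
  fix u v
  assume "length u = k \<and> length v = k \<and> (\<forall>i<k. \<exists>B\<in>Cl. u ! i \<in> B \<and> v ! i \<in> B)"
  then show "f u = f v" using assms(2) by (simp add: list_all2_conv_all_nth)
qed (use assms(1) in blast)

lemma scf_pow_lincomb:
  assumes "f \<in> scf_pow G Cl k" "g \<in> scf_pow G Cl k"
  shows "(\<lambda>w. p * f w + q * g w) \<in> scf_pow G Cl k"
proof (rule scf_powI)
  show "p * f w + q * g w = 0" if "\<not> (length w = k \<and> set w \<subseteq> carrier G)" for w
    using scf_pow_vanish[OF assms(1) that] scf_pow_vanish[OF assms(2) that] by simp
  show "p * f u + q * g u = p * f v + q * g v"
    if "length u = k" "list_all2 (same_block Cl) u v" for u v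
    using scf_pow_eq[OF assms(1) that] scf_pow_eq[OF assms(2) that] by simp
qed

lemma tensor_in_scf_pow:
  assumes "\<forall>x\<in>set xs. \<phi> x \<in> scf G Cl"
  shows "tensor \<phi> xs \<in> scf_pow G Cl (length xs)"
proof (rule scf_powI)
  show "tensor \<phi> xs w = 0" if "\<not> (length w = length xs \<and> set w \<subseteq> carrier G)" for w
    using assms that
  proof (induction \<phi> xs w rule: tensor.induct)
    case (2 \<phi> x xs a w)
    then show ?case by (cases "a \<in> carrier G") (auto simp: scf_vanish)
  qed auto
  show "tensor \<phi> xs u = tensor \<phi> xs v"
    if "length u = length xs" "list_all2 (same_block Cl) u v" for u v
    using that(2) assms
  proof (induction arbitrary: xs rule: list_all2_induct)
    case Nil
    then show ?case by (cases xs) simp_all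
  next
    case (Cons a u b v)
    note ab = Cons.hyps(1) and IH = Cons.IH and scf = Cons.prems
    show ?case
    proof (cases xs)
      case xs: (Cons y ys)
      obtain B where "B \<in> Cl" "a \<in> B" "b \<in> B" using ab by blast
      moreover have "\<phi> y \<in> scf G Cl" using scf xs by simp
      ultimately have "\<phi> y a = \<phi> y b" by (blast intro: scf_eq)
      then show ?thesis using IH[of ys] scf xs by simp
    qed simp
  qed
qed

definition basis_fun :: "('g \<Rightarrow> complex) \<Rightarrow> 'g set option \<Rightarrow> 'g \<Rightarrow> complex" where
  "basis_fun \<iota> x = (case x of None \<Rightarrow> \<iota> | Some B \<Rightarrow> (\<lambda>a. of_bool (a \<in> B)))"

lemma basis_fun_simps [simp]:
  "basis_fun \<iota> None = \<iota>" "basis_fun \<iota> (Some B) a = of_bool (a \<in> B)"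
  by (simp_all add: basis_fun_def)

locale scf_block_basis =
  fixes G :: "('g, 'b) monoid_scheme" and Cl :: "'g set set" and \<iota> :: "'g \<Rightarrow> complex"
    and B0 :: "'g set" and b0 :: 'g
  assumes partition: "partition_on (carrier G) Cl"
    and finite_carrier: "finite (carrier G)"
    and iota_scf: "\<iota> \<in> scf G Cl"
    and B0: "B0 \<in> Cl" "b0 \<in> B0"
    and iota_b0: "\<iota> b0 \<noteq> 0"
begin

text \<open>The basis of scf(G): \<open>\<iota>\<close> (letter \<open>None\<close>) and the indicators of the blocks other
  than \<open>B0\<close> (letters \<open>Some B\<close>).\<close>

definition letters :: "'g set option set" where
  "letters = insert None (Some ` (Cl - {B0}))"

definition rep :: "'g set \<Rightarrow> 'g" where
  "rep B = (SOME a. a \<in> B)"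

definition coef :: "'g set option \<Rightarrow> ('g \<Rightarrow> complex) \<Rightarrow> complex" where
  "coef x h = (case x of None \<Rightarrow> h b0 / \<iota> b0 | Some B \<Rightarrow> h (rep B) - \<iota> (rep B) * h b0 / \<iota> b0)"

lemma block_subset_carrier: "B \<in> Cl \<Longrightarrow> B \<subseteq> carrier G"
  using partition_onD1[OF partition] by blast

lemma block_exists: "a \<in> carrier G \<Longrightarrow> \<exists>B\<in>Cl. a \<in> B"
  using partition_onD1[OF partition] by blast

lemma block_unique: "B \<in> Cl \<Longrightarrow> C \<in> Cl \<Longrightarrow> a \<in> B \<Longrightarrow> a \<in> C \<Longrightarrow> B = C"
  using partition_onD2[OF partition] by (auto simp: disjoint_def)

lemma rep_in: "B \<in> Cl \<Longrightarrow> rep B \<in> B"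
  using partition_onD3[OF partition] unfolding rep_def by (metis ex_in_conv someI_ex)

lemma finite_letters: "finite letters"
proof -
  have "Cl \<subseteq> Pow (carrier G)" using block_subset_carrier by blast
  then have "finite Cl" using finite_carrier by (meson finite_Pow_iff finite_subset)
  then show ?thesis by (simp add: letters_def)
qed

lemma sum_letters: "(\<Sum>x\<in>letters. g x) = g None + (\<Sum>B\<in>Cl - {B0}. g (Some B))"
  using finite_letters by (simp add: letters_def sum.reindex)

lemma sum_indicator_blocks:
  fixes d :: "'g set \<Rightarrow> complex"
  assumes "C \<in> Cl" "a \<in> C"
  shows "(\<Sum>B\<in>Cl - {B0}. d B * of_bool (a \<in> B)) = (if C = B0 then 0 else d C)"
proof -
  have "(\<Sum>B\<in>Cl - {B0}. d B * of_bool (a \<in> B)) = (\<Sum>B\<in>Cl - {B0}. if B = C then d C else 0)"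
  proof (rule sum.cong)
    fix B assume "B \<in> Cl - {B0}"
    then have "a \<in> B \<longleftrightarrow> B = C" using assms block_unique by blast
    then show "d B * of_bool (a \<in> B) = (if B = C then d C else 0)" by simp
  qed simp
  also have "\<dots> = (if C = B0 then 0 else d C)"
    using finite_letters assms(1) by (simp add: letters_def)
  finally show ?thesis .
qed

lemma basis_fun_in_scf: "x \<in> letters \<Longrightarrow> basis_fun \<iota> x \<in> scf G Cl"
proof (cases x)
  case None
  then show ?thesis using iota_scf by simp
next
  case (Some C)
  assume "x \<in> letters"
  with Some have C: "C \<in> Cl" by (auto simp: letters_def)
  show ?thesis unfolding scf_def Some
  proof (intro CollectI conjI allI impI ballI)
    show "basis_fun \<iota> (Some C) a = 0" if "a \<notin> carrier G" for a
      using that block_subset_carrier[OF C] by auto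
    show "basis_fun \<iota> (Some C) a = basis_fun \<iota> (Some C) b" if "B \<in> Cl" "a \<in> B" "b \<in> B" for B a b
    proof -
      have "a \<in> C \<longleftrightarrow> b \<in> C" using that C block_unique by blast
      then show ?thesis by simp
    qed
  qed
qed

lemma basis_fun_expansion:
  assumes "h \<in> scf G Cl"
  shows "h a = (\<Sum>x\<in>letters. coef x h * basis_fun \<iota> x a)"
proof (cases "a \<in> carrier G")
  case False
  then have "a \<notin> B" if "B \<in> Cl" for B using that block_subset_carrier by blast
  then show ?thesis using False assms iota_scf by (simp add: sum_letters scf_vanish)
next
  case True
  then obtain C where C: "C \<in> Cl" "a \<in> C" using block_exists by blast
  show ?thesis
  proof (cases "C = B0")
    case True
    then have "h a = h b0" "\<iota> a = \<iota> b0" using C B0 assms iota_scf by (metis scf_eq)+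
    then show ?thesis using C True iota_b0 by (simp add: sum_letters sum_indicator_blocks coef_def)
  next
    case False
    have "h a = h (rep C)" "\<iota> a = \<iota> (rep C)" using C rep_in assms iota_scf by (metis scf_eq)+
    then show ?thesis using C False by (simp add: sum_letters sum_indicator_blocks coef_def)
  qed
qed

lemma basis_fun_linear_independent:
  "\<forall>c. (\<forall>a. (\<Sum>x\<in>letters. c x * basis_fun \<iota> x a) = 0) \<longrightarrow> (\<forall>x\<in>letters. c x = 0)"
proof (intro allI impI)
  fix c assume zero: "\<forall>a. (\<Sum>x\<in>letters. c x * basis_fun \<iota> x a) = 0"
  have "c None * \<iota> b0 = 0"
    using zero[rule_format, of b0] B0 by (simp add: sum_letters sum_indicator_blocks)
  then have None: "c None = 0" using iota_b0 by simp
  have "c (Some B) = 0" if "B \<in> Cl - {B0}" for B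
    using zero[rule_format, of "rep B"] that rep_in None sum_indicator_blocks[of B "rep B"]
    by (simp add: sum_letters)
  then show "\<forall>x\<in>letters. c x = 0" using None by (auto simp: letters_def)
qed

lemma scf_pow_Cons_tail:
  assumes "f \<in> scf_pow G Cl (Suc k)"
  shows "(\<lambda>u. f (a # u)) \<in> scf_pow G Cl k"
proof (rule scf_powI)
  show "f (a # w) = 0" if "\<not> (length w = k \<and> set w \<subseteq> carrier G)" for w
    using that by (intro scf_pow_vanish[OF assms]) auto
  show "f (a # u) = f (a # v)"
    if "length u = k" "list_all2 (same_block Cl) u v" for u v
  proof (cases "a \<in> carrier G")
    case True
    then obtain B where "B \<in> Cl" "a \<in> B" using block_exists by blast
    then show ?thesis using that by (intro scf_pow_eq[OF assms]) auto
  next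
    case False
    then show ?thesis by (simp add: scf_pow_vanish[OF assms])
  qed
qed

lemma scf_pow_Cons_head:
  assumes "f \<in> scf_pow G Cl (Suc k)"
  shows "(\<lambda>a. f (a # u)) \<in> scf G Cl"
  unfolding scf_def
proof (intro CollectI conjI allI impI ballI)
  show "f (a # u) = 0" if "a \<notin> carrier G" for a
    using that by (intro scf_pow_vanish[OF assms]) auto
  show "f (a # u) = f (b # u)" if "B \<in> Cl" "a \<in> B" "b \<in> B" for B a b
  proof (cases "length u = k \<and> set u \<subseteq> carrier G")
    case True
    have "list_all2 (same_block Cl) u u"
      using True block_exists by (intro list.rel_refl_strong) blast
    then show ?thesis using that True by (intro scf_pow_eq[OF assms]) auto
  next
    case False
    then show ?thesis by (simp add: scf_pow_vanish[OF assms])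
  qed
qed

lemma coef_Cons_in_scf_pow:
  assumes "f \<in> scf_pow G Cl (Suc k)"
  shows "(\<lambda>u. coef x (\<lambda>a. f (a # u))) \<in> scf_pow G Cl k"
proof (cases x)
  case None
  have "(\<lambda>u. inverse (\<iota> b0) * f (b0 # u) + 0 * f (b0 # u)) \<in> scf_pow G Cl k"
    by (intro scf_pow_lincomb scf_pow_Cons_tail assms)
  then show ?thesis using None by (simp add: coef_def divide_inverse mult.commute)
next
  case (Some B)
  have "(\<lambda>u. 1 * f (rep B # u) + (- \<iota> (rep B) / \<iota> b0) * f (b0 # u)) \<in> scf_pow G Cl k"
    by (intro scf_pow_lincomb scf_pow_Cons_tail assms)
  then show ?thesis using Some by (simp add: coef_def)
qed

lemma scf_pow_tensor_expansion:
  assumes "f \<in> scf_pow G Cl k"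
  shows "\<exists>c. \<forall>w. f w =
           (\<Sum>xs | set xs \<subseteq> letters \<and> length xs = k. c xs * tensor (basis_fun \<iota>) xs w)"
  using assms
proof (induction k arbitrary: f)
  case 0
  have lists0: "{xs. set xs \<subseteq> letters \<and> length xs = 0} = {[]}" by auto
  have "f w = (\<Sum>xs\<in>{xs. set xs \<subseteq> letters \<and> length xs = 0}. f [] * tensor (basis_fun \<iota>) xs w)"
    for w
    unfolding lists0 using scf_pow_vanish[OF "0.prems", of w] by (cases w) simp_all
  then show ?case by (intro exI[of _ "\<lambda>_. f []"]) blast
next
  case (Suc k)
  let ?lists = "\<lambda>k. {xs. set xs \<subseteq> letters \<and> length xs = k}"
  have "\<forall>x. \<exists>c. \<forall>u. coef x (\<lambda>a. f (a # u)) = (\<Sum>xs\<in>?lists k. c xs * tensor (basis_fun \<iota>) xs u)"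
    using Suc.IH[OF coef_Cons_in_scf_pow[OF Suc.prems]] by blast
  from choice[OF this] obtain d where d: "\<And>x u. coef x (\<lambda>a. f (a # u)) =
                            (\<Sum>xs\<in>?lists k. d x xs * tensor (basis_fun \<iota>) xs u)"
    by blast
  have "f w = (\<Sum>ys\<in>?lists (Suc k). d (hd ys) (tl ys) * tensor (basis_fun \<iota>) ys w)" for w
  proof (cases w)
    case Nil
    have "tensor (basis_fun \<iota>) ys [] = 0" if "ys \<in> ?lists (Suc k)" for ys
      using that by (simp add: tensor_eq_0_if_length_neq)
    then show ?thesis using Nil scf_pow_vanish[OF Suc.prems, of "[]"] by simp
  next
    case (Cons a u)
    have "f (a # u) = (\<Sum>x\<in>letters. coef x (\<lambda>a. f (a # u)) * basis_fun \<iota> x a)"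
      by (rule basis_fun_expansion[OF scf_pow_Cons_head[OF Suc.prems]])
    also have "\<dots> = (\<Sum>x\<in>letters. \<Sum>xs\<in>?lists k. d x xs * tensor (basis_fun \<iota>) (x # xs) (a # u))"
    proof (rule sum.cong[OF refl])
      fix x
      show "coef x (\<lambda>a. f (a # u)) * basis_fun \<iota> x a =
            (\<Sum>xs\<in>?lists k. d x xs * tensor (basis_fun \<iota>) (x # xs) (a # u))"
        unfolding d sum_distrib_right by (simp add: mult.commute mult.left_commute)
    qed
    also have "\<dots> = (\<Sum>ys\<in>?lists (Suc k). d (hd ys) (tl ys) * tensor (basis_fun \<iota>) ys (a # u))"
      by (simp add: sum_lists_length_Suc[OF finite_letters])
    finally show ?thesis using Cons by simp
  qed
  then show ?case by (intro exI[of _ "\<lambda>ys. d (hd ys) (tl ys)"]) blast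
qed

end

definition pure_tensor :: "('g \<Rightarrow> complex) \<Rightarrow> 'g set option list \<Rightarrow> 'g helt" where
  "pure_tensor \<iota> xs = (\<lambda>n w. if n = Suc (length xs) then tensor (basis_fun \<iota>) xs w else 0)"

lemma pure_tensor_0 [simp]: "pure_tensor \<iota> xs 0 = (\<lambda>w. 0)"
  by (simp add: pure_tensor_def)

lemma hmul_zero_left: "hmul \<iota> m n (\<lambda>w. 0) g = (\<lambda>w. 0)"
  by (simp add: hmul_def fun_eq_iff)

lemma hmul_zero_right: "hmul \<iota> m n f (\<lambda>w. 0) = (\<lambda>w. 0)"
  by (simp add: hmul_def fun_eq_iff)

lemma hmul_tensor:
  "hmul \<iota> (Suc (length xs)) (Suc (length ys)) (tensor (basis_fun \<iota>) xs) (tensor (basis_fun \<iota>) ys) =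
   tensor (basis_fun \<iota>) (xs @ None # ys)"
proof
  fix w
  show "hmul \<iota> (Suc (length xs)) (Suc (length ys)) (tensor (basis_fun \<iota>) xs) (tensor (basis_fun \<iota>) ys) w =
        tensor (basis_fun \<iota>) (xs @ None # ys) w"
  proof (cases "length w = length xs + length ys + 1")
    case True
    then have "drop (length xs) w = w ! length xs # drop (Suc (length xs)) w"
      by (simp add: Cons_nth_drop_Suc)
    then show ?thesis using True by (simp add: hmul_def tensor_append)
  next
    case False
    then show ?thesis by (simp add: hmul_def tensor_eq_0_if_length_neq)
  qed
qed

lemma Hmult_homogeneous_left:
  assumes "\<And>m. m \<noteq> p \<Longrightarrow> x m = (\<lambda>w. 0)"
  shows "Hmult \<iota> x y n = (if p \<le> n then hmul \<iota> p (n - p) (x p) (y (n - p)) else (\<lambda>w. 0))"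
proof
  fix w
  have "Hmult \<iota> x y n w = (\<Sum>m\<le>n. if m = p then hmul \<iota> p (n - p) (x p) (y (n - p)) w else 0)"
    unfolding Hmult_def by (intro sum.cong) (auto simp: assms hmul_zero_left)
  then show "Hmult \<iota> x y n w = (if p \<le> n then hmul \<iota> p (n - p) (x p) (y (n - p)) else (\<lambda>w. 0)) w"
    by simp
qed

lemma Hmult_pure_tensor:
  "Hmult \<iota> (pure_tensor \<iota> xs) (pure_tensor \<iota> ys) = pure_tensor \<iota> (xs @ None # ys)"
proof
  fix n
  have "Hmult \<iota> (pure_tensor \<iota> xs) (pure_tensor \<iota> ys) n =
        (if Suc (length xs) \<le> n
         then hmul \<iota> (Suc (length xs)) (n - Suc (length xs)) (tensor (basis_fun \<iota>) xs)
                (pure_tensor \<iota> ys (n - Suc (length xs)))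
         else (\<lambda>w. 0))"
    by (subst Hmult_homogeneous_left[of "Suc (length xs)"]) (simp_all add: pure_tensor_def)
  also have "\<dots> = pure_tensor \<iota> (xs @ None # ys) n"
  proof (cases "n = Suc (length xs) + Suc (length ys)")
    case True
    then show ?thesis using hmul_tensor[of \<iota> xs ys] by (simp add: pure_tensor_def)
  next
    case False
    then have "pure_tensor \<iota> ys (n - Suc (length xs)) = (\<lambda>w. 0)" if "Suc (length xs) \<le> n"
      using that by (auto simp: pure_tensor_def)
    then show ?thesis using False by (simp add: pure_tensor_def hmul_zero_right)
  qed
  finally show "Hmult \<iota> (pure_tensor \<iota> xs) (pure_tensor \<iota> ys) n = pure_tensor \<iota> (xs @ None # ys) n" .
qed

lemma Hmult_Hunit_right:
  assumes "x 0 = (\<lambda>w. 0)"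
  shows "Hmult \<iota> x Hunit = x"
proof (intro ext)
  fix n w
  have "Hmult \<iota> x Hunit n w = (\<Sum>m\<le>n. if m = n then x n w else 0)"
    unfolding Hmult_def
  proof (rule sum.cong[OF refl])
    fix m assume "m \<in> {..n}"
    then show "hmul \<iota> m (n - m) (x m) (Hunit (n - m)) w = (if m = n then x n w else 0)"
      using assms by (cases "m = n") (auto simp: hmul_def Hunit_def)
  qed
  then show "Hmult \<iota> x Hunit n w = x n w" by simp
qed

text \<open>A word of generators \<open>bs\<^sub>1, \<dots>, bs\<^sub>r\<close> multiplies out to the pure tensor with letters
  \<open>bs\<^sub>1 None bs\<^sub>2 None \<dots> None bs\<^sub>r\<close>; \<open>split_None\<close> cuts a letter word at its \<open>None\<close>s.\<close>

fun join_None :: "'a list list \<Rightarrow> 'a option list" where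
  "join_None [] = []"
| "join_None [bs] = map Some bs"
| "join_None (bs # bs' # bss) = map Some bs @ None # join_None (bs' # bss)"

fun split_None :: "'a option list \<Rightarrow> 'a list list" where
  "split_None [] = [[]]"
| "split_None (None # xs) = [] # split_None xs"
| "split_None (Some a # xs) = (a # hd (split_None xs)) # tl (split_None xs)"

lemma split_None_not_Nil: "split_None xs \<noteq> []"
  by (induction xs rule: split_None.induct) auto

lemma join_None_Cons_Cons: "join_None ((a # bs) # bss) = Some a # join_None (bs # bss)"
  by (cases bss) auto

lemma join_split_None: "join_None (split_None xs) = xs"
proof (induction xs rule: split_None.induct)
  case (2 xs)
  then show ?case using split_None_not_Nil[of xs] by (cases "split_None xs") auto
next
  case (3 a xs)
  then show ?case using split_None_not_Nil[of xs] by (simp add: join_None_Cons_Cons)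
qed simp

lemma split_None_append:
  "split_None (map Some bs @ xs) = (bs @ hd (split_None xs)) # tl (split_None xs)"
  by (induction bs) (simp_all add: split_None_not_Nil)

lemma split_join_None: "bss \<noteq> [] \<Longrightarrow> split_None (join_None bss) = bss"
proof (induction bss rule: join_None.induct)
  case (2 bs)
  then show ?case using split_None_append[of bs "[]"] by simp
next
  case (3 bs bs' bss)
  then show ?case by (simp add: split_None_append)
qed simp

lemma set_join_None: "bss \<in> lists (lists A) \<Longrightarrow> set (join_None bss) \<subseteq> insert None (Some ` A)"
  by (induction bss rule: join_None.induct) auto

lemma split_None_in_lists:
  "set xs \<subseteq> insert None (Some ` A) \<Longrightarrow> split_None xs \<in> lists (lists A)"
proof (induction xs rule: split_None.induct)
  case (3 a xs)
  then show ?case using split_None_not_Nil[of xs] by (cases "split_None xs") auto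
qed auto

definition generator :: "('g \<Rightarrow> complex) \<Rightarrow> 'g set list \<Rightarrow> 'g helt" where
  "generator \<iota> bs = pure_tensor \<iota> (map Some bs)"

definition monomial :: "('g \<Rightarrow> complex) \<Rightarrow> 'g set list list \<Rightarrow> 'g helt" where
  "monomial \<iota> bss = (if bss = [] then Hunit else pure_tensor \<iota> (join_None bss))"

lemma Hword_map_generator: "Hword \<iota> (map (generator \<iota>) bss) = monomial \<iota> bss"
  by (induction bss rule: join_None.induct)
     (simp_all add: monomial_def generator_def Hmult_Hunit_right Hmult_pure_tensor)

lemma monomial_0_Nil: "monomial \<iota> bss 0 [] = of_bool (bss = [])"
  by (simp add: monomial_def Hunit_def)

lemma monomial_Suc:
  "monomial \<iota> bss (Suc k) w =
     (if bss \<noteq> [] \<and> length (join_None bss) = k then tensor (basis_fun \<iota>) (join_None bss) w else 0)"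
  by (simp add: monomial_def pure_tensor_def Hunit_def)

lemma sum_pure_tensor_Suc:
  assumes "finite X"
  shows "(\<Sum>xs\<in>X. c xs * pure_tensor \<iota> xs (Suc k) w) =
         (\<Sum>xs\<in>{xs \<in> X. length xs = k}. c xs * tensor (basis_fun \<iota>) xs w)"
  unfolding sum.inter_filter[OF assms] by (intro sum.cong) (auto simp: pure_tensor_def)

definition hcomb :: "('i \<Rightarrow> 'g helt) \<Rightarrow> 'i set \<Rightarrow> ('i \<Rightarrow> complex) \<Rightarrow> 'g helt" where
  "hcomb v V c = (\<lambda>n w. \<Sum>i\<in>V. c i * v i n w)"

definition hindep :: "('i \<Rightarrow> 'g helt) \<Rightarrow> 'i set \<Rightarrow> bool" where
  "hindep v I \<longleftrightarrow> (\<forall>V c. finite V \<and> V \<subseteq> I \<and> hcomb v V c = (\<lambda>n w. 0) \<longrightarrow> (\<forall>i\<in>V. c i = 0))"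

definition hspan :: "('i \<Rightarrow> 'g helt) \<Rightarrow> 'i set \<Rightarrow> 'g helt set" where
  "hspan v I = {x. \<exists>V c. finite V \<and> V \<subseteq> I \<and> x = hcomb v V c}"

lemma H_free_algebraI:
  assumes "Z \<subseteq> H_carrier G Cl" "hindep (Hword \<iota>) (lists Z)"
    and "H_carrier G Cl \<subseteq> hspan (Hword \<iota>) (lists Z)"
  shows "H_free_algebra G Cl \<iota>"
  unfolding H_free_algebra_def
proof (intro exI[of _ Z] conjI allI impI ballI)
  show "Z \<subseteq> H_carrier G Cl" by fact
  show "c ws = 0"
    if "finite W \<and> W \<subseteq> lists Z \<and> (\<lambda>n w. \<Sum>ws\<in>W. c ws * Hword \<iota> ws n w) = (\<lambda>n w. 0)"
      and "ws \<in> W" for W c ws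
    using hindep_def[THEN iffD1, OF assms(2), rule_format, of W c ws] that by (simp add: hcomb_def)
  show "\<exists>W c. finite W \<and> W \<subseteq> lists Z \<and> x = (\<lambda>n w. \<Sum>ws\<in>W. c ws * Hword \<iota> ws n w)"
    if "x \<in> H_carrier G Cl" for x
  proof -
    have "x \<in> hspan (Hword \<iota>) (lists Z)" using assms(3) that by blast
    then obtain V c where "finite V" "V \<subseteq> lists Z" "x = hcomb (Hword \<iota>) V c"
      unfolding hspan_def by blast
    then show ?thesis by (intro exI[of _ V] exI[of _ c]) (simp add: hcomb_def)
  qed
qed

lemma hcomb_cong: "(\<And>i. i \<in> V \<Longrightarrow> c i = d i) \<Longrightarrow> hcomb v V c = hcomb v V d"
  by (simp add: hcomb_def)

lemma hcomb_reindex: "inj_on f V \<Longrightarrow> hcomb u (f ` V) c = hcomb (u \<circ> f) V (c \<circ> f)"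
  by (simp add: hcomb_def sum.reindex)

lemma hindepD:
  "hindep v I \<Longrightarrow> finite V \<Longrightarrow> V \<subseteq> I \<Longrightarrow> hcomb v V c = (\<lambda>n w. 0) \<Longrightarrow> i \<in> V \<Longrightarrow> c i = 0"
  unfolding hindep_def by blast

lemma hindep_inj_on:
  assumes "hindep v I"
  shows "inj_on v I"
proof (rule inj_onI, rule ccontr)
  fix i j
  assume "i \<in> I" "j \<in> I" "v i = v j" "i \<noteq> j"
  let ?c = "\<lambda>k. if k = i then 1 else - 1 :: complex"
  have comb: "hcomb v {i, j} ?c = (\<lambda>n w. 0)"
    using \<open>v i = v j\<close> \<open>i \<noteq> j\<close> by (simp add: hcomb_def)
  have "?c i = 0"
    by (rule hindepD[OF assms _ _ comb]) (use \<open>i \<in> I\<close> \<open>j \<in> I\<close> in auto)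
  then show False by simp
qed

lemma hindep_reindex:
  assumes "bij_betw f I J" "hindep (u \<circ> f) I"
  shows "hindep u J"
  unfolding hindep_def
proof (intro allI impI ballI)
  fix W c j
  assume W: "finite W \<and> W \<subseteq> J \<and> hcomb u W c = (\<lambda>n w. 0)" and "j \<in> W"
  define V where "V = {i \<in> I. f i \<in> W}"
  have inj: "inj_on f V"
    using assms(1) by (auto simp: V_def bij_betw_def intro: inj_on_subset)
  have image: "f ` V = W"
    using W assms(1) by (auto simp: V_def bij_betw_def)
  have "finite V" using W inj image finite_imageD by metis
  moreover have "hcomb (u \<circ> f) V (c \<circ> f) = (\<lambda>n w. 0)"
    using W hcomb_reindex[OF inj, of u c] unfolding image by simp
  moreover have "V \<subseteq> I" by (auto simp: V_def)
  ultimately have "\<forall>i\<in>V. (c \<circ> f) i = 0"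
    using assms(2) unfolding hindep_def by blast
  then show "c j = 0" using \<open>j \<in> W\<close> image by auto
qed

lemma hspan_reindex:
  assumes "inj_on f I" "f ` I \<subseteq> J"
  shows "hspan (u \<circ> f) I \<subseteq> hspan u J"
proof
  fix x assume "x \<in> hspan (u \<circ> f) I"
  then obtain V c where V: "finite V" "V \<subseteq> I" and x: "x = hcomb (u \<circ> f) V c"
    unfolding hspan_def by blast
  have inj: "inj_on f V" using assms(1) V(2) by (rule inj_on_subset)
  have "x = hcomb (u \<circ> f) V (c \<circ> the_inv_into V f \<circ> f)"
    unfolding x by (rule hcomb_cong) (simp add: the_inv_into_f_f[OF inj])
  also have "\<dots> = hcomb u (f ` V) (c \<circ> the_inv_into V f)"
    by (simp add: hcomb_reindex[OF inj])
  finally show "x \<in> hspan u J" using V assms(2) unfolding hspan_def by blast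
qed

lemma H_carrier_bounded:
  assumes "x \<in> H_carrier G Cl"
  obtains K where "\<And>n. K \<le> n \<Longrightarrow> x n = (\<lambda>w. 0)"
proof -
  have "finite {n. x n \<noteq> (\<lambda>w. 0)}"
    using assms by (simp add: H_carrier_def)
  then obtain K where "\<forall>n\<in>{n. x n \<noteq> (\<lambda>w. 0)}. n < K"
    unfolding finite_nat_set_iff_bounded by blast
  then show thesis using that[of K] not_less by blast
qed

context scf_block_basis
begin

lemma pure_tensor_in_H_carrier:
  assumes "set xs \<subseteq> letters"
  shows "pure_tensor \<iota> xs \<in> H_carrier G Cl"
proof -
  have "finite {n. pure_tensor \<iota> xs n \<noteq> (\<lambda>w. 0)}"
    by (rule finite_subset[of _ "{Suc (length xs)}"]) (auto simp: pure_tensor_def)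
  moreover have "tensor (basis_fun \<iota>) xs \<in> scf_pow G Cl (length xs)"
    using assms basis_fun_in_scf by (intro tensor_in_scf_pow) blast
  then have "pure_tensor \<iota> xs n \<in> scf_pow G Cl (n - 1)" for n
    by (cases "n = Suc (length xs)") (simp_all add: pure_tensor_def scf_pow_def)
  ultimately show ?thesis by (simp add: H_carrier_def)
qed

lemma generator_in_H_carrier: "bs \<in> lists (Cl - {B0}) \<Longrightarrow> generator \<iota> bs \<in> H_carrier G Cl"
  unfolding generator_def by (rule pure_tensor_in_H_carrier) (auto simp: letters_def)

lemma join_None_tensor_independent:
  assumes "finite V" "V \<subseteq> lists (lists (Cl - {B0}))"
    and V: "\<And>bss. bss \<in> V \<Longrightarrow> bss \<noteq> [] \<and> length (join_None bss) = k"
    and zero: "\<And>w. (\<Sum>bss\<in>V. c bss * tensor (basis_fun \<iota>) (join_None bss) w) = 0"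
    and "bss0 \<in> V"
  shows "c bss0 = 0"
proof -
  let ?lists = "{xs. set xs \<subseteq> letters \<and> length xs = k}"
  have inj: "inj_on join_None V"
    by (rule inj_on_inverseI[where g = split_None]) (simp add: V split_join_None)
  have V_lists: "join_None ` V \<subseteq> ?lists"
  proof
    fix xs assume "xs \<in> join_None ` V"
    then obtain bss where "bss \<in> V" "xs = join_None bss" by blast
    moreover have "bss \<in> lists (lists (Cl - {B0}))" using assms(2) \<open>bss \<in> V\<close> by blast
    ultimately show "xs \<in> ?lists" using V set_join_None by (simp add: letters_def)
  qed
  define d where "d xs = (if xs \<in> join_None ` V then c (split_None xs) else 0)" for xs
  have "(\<Sum>xs\<in>?lists. d xs * tensor (basis_fun \<iota>) xs w) = 0" for w
  proof -
    have "(\<Sum>xs\<in>?lists. d xs * tensor (basis_fun \<iota>) xs w) =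
          (\<Sum>xs\<in>join_None ` V. c (split_None xs) * tensor (basis_fun \<iota>) xs w)"
      using finite_lists_length_eq[OF finite_letters] V_lists
      by (intro sum.mono_neutral_cong_right) (auto simp: d_def)
    also have "\<dots> = (\<Sum>bss\<in>V. c (split_None (join_None bss)) * tensor (basis_fun \<iota>) (join_None bss) w)"
      by (simp add: sum.reindex[OF inj])
    also have "\<dots> = (\<Sum>bss\<in>V. c bss * tensor (basis_fun \<iota>) (join_None bss) w)"
      by (intro sum.cong) (simp_all add: V split_join_None)
    finally show ?thesis using zero by simp
  qed
  moreover have "set (join_None bss0) \<subseteq> letters" "length (join_None bss0) = k"
    using V_lists \<open>bss0 \<in> V\<close> by auto
  ultimately have "d (join_None bss0) = 0"
    by (rule tensor_linear_independent[OF finite_letters basis_fun_linear_independent])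
  then show ?thesis using \<open>bss0 \<in> V\<close> V by (simp add: d_def split_join_None)
qed

lemma monomial_hindep: "hindep (monomial \<iota>) (lists (lists (Cl - {B0})))"
  unfolding hindep_def
proof (intro allI impI ballI)
  fix V c bss0
  assume V: "finite V \<and> V \<subseteq> lists (lists (Cl - {B0})) \<and> hcomb (monomial \<iota>) V c = (\<lambda>n w. 0)"
    and "bss0 \<in> V"
  then have "finite V" by simp
  have "hcomb (monomial \<iota>) V c n w = 0" for n w using V by simp
  then have zero: "(\<Sum>bss\<in>V. c bss * monomial \<iota> bss n w) = 0" for n w by (simp add: hcomb_def)
  show "c bss0 = 0"
  proof (cases "bss0 = []")
    case True
    have "(\<Sum>bss\<in>V. c bss * monomial \<iota> bss 0 []) = c bss0"
      using \<open>finite V\<close> \<open>bss0 \<in> V\<close> True by (simp add: monomial_0_Nil if_distrib cong: if_cong)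
    then show ?thesis using zero by simp
  next
    case False
    define k where "k = length (join_None bss0)"
    define V' where "V' = {bss \<in> V. bss \<noteq> [] \<and> length (join_None bss) = k}"
    have "finite V'" using \<open>finite V\<close> by (simp add: V'_def)
    moreover have "V' \<subseteq> lists (lists (Cl - {B0}))" using V unfolding V'_def by blast
    moreover have "bss \<noteq> [] \<and> length (join_None bss) = k" if "bss \<in> V'" for bss
      using that by (simp add: V'_def)
    moreover have "(\<Sum>bss\<in>V'. c bss * tensor (basis_fun \<iota>) (join_None bss) w) = 0" for w
    proof -
      have "(\<Sum>bss\<in>V'. c bss * tensor (basis_fun \<iota>) (join_None bss) w) =
            (\<Sum>bss\<in>V. c bss * monomial \<iota> bss (Suc k) w)"
        unfolding V'_def using \<open>finite V\<close>
        by (simp add: sum.inter_filter monomial_Suc if_distrib cong: if_cong)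
      then show ?thesis using zero by simp
    qed
    moreover have "bss0 \<in> V'"
      using \<open>bss0 \<in> V\<close> False by (simp add: V'_def k_def)
    ultimately show ?thesis by (rule join_None_tensor_independent)
  qed
qed

lemma H_carrier_pure_tensor_expansion:
  assumes "x \<in> H_carrier G Cl"
  obtains K a c where "x = (\<lambda>n w. a * Hunit n w +
      (\<Sum>xs | set xs \<subseteq> letters \<and> length xs < K. c xs * pure_tensor \<iota> xs n w))"
proof -
  have x_scf: "x n \<in> scf_pow G Cl (n - 1)" for n
    using assms by (simp add: H_carrier_def)
  obtain K where K: "\<And>n. K \<le> n \<Longrightarrow> x n = (\<lambda>w. 0)"
    using H_carrier_bounded[OF assms] by blast
  let ?X = "{xs. set xs \<subseteq> letters \<and> length xs < K}"
  have "\<forall>k. \<exists>c. \<forall>w. x (Suc k) w =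
          (\<Sum>xs | set xs \<subseteq> letters \<and> length xs = k. c xs * tensor (basis_fun \<iota>) xs w)"
    using scf_pow_tensor_expansion[OF x_scf[of "Suc _"]] by simp
  from choice[OF this] obtain cf where cf: "\<forall>k w. x (Suc k) w =
          (\<Sum>xs | set xs \<subseteq> letters \<and> length xs = k. cf k xs * tensor (basis_fun \<iota>) xs w)"
    by blast
  define a where "a = x 0 []"
  define c where "c xs = cf (length xs) xs" for xs
  have finite_X: "finite ?X"
    using finite_lists_length_le[OF finite_letters, of K]
    by (rule finite_subset[rotated]) auto
  have "x n w = a * Hunit n w + (\<Sum>xs\<in>?X. c xs * pure_tensor \<iota> xs n w)" for n w
  proof (cases n)
    case 0
    then show ?thesis
      using scf_pow_vanish[OF x_scf[of 0], of w] by (cases w) (simp_all add: a_def Hunit_def)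
  next
    case (Suc k)
    have "(\<Sum>xs\<in>?X. c xs * pure_tensor \<iota> xs n w) =
          (\<Sum>xs\<in>{xs \<in> ?X. length xs = k}. cf k xs * tensor (basis_fun \<iota>) xs w)"
      unfolding Suc sum_pure_tensor_Suc[OF finite_X] by (intro sum.cong) (simp_all add: c_def)
    also have "\<dots> = x n w"
    proof (cases "k < K")
      case True
      then have lists_k: "{xs \<in> ?X. length xs = k} = {xs. set xs \<subseteq> letters \<and> length xs = k}"
        by auto
      show ?thesis unfolding lists_k using Suc cf by simp
    next
      case False
      then have empty: "{xs \<in> ?X. length xs = k} = {}" by auto
      show ?thesis unfolding empty using Suc K[of n] False by simp
    qed
    finally show ?thesis using Suc by (simp add: Hunit_def)
  qed
  then show thesis using that[of a c K] by (simp add: fun_eq_iff)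
qed

lemma H_carrier_subset_hspan: "H_carrier G Cl \<subseteq> hspan (monomial \<iota>) (lists (lists (Cl - {B0})))"
proof
  fix x assume "x \<in> H_carrier G Cl"
  then obtain K a c where x: "x = (\<lambda>n w. a * Hunit n w +
      (\<Sum>xs | set xs \<subseteq> letters \<and> length xs < K. c xs * pure_tensor \<iota> xs n w))"
    by (rule H_carrier_pure_tensor_expansion)
  define X where "X = {xs. set xs \<subseteq> letters \<and> length xs < K}"
  define e where "e bss = (if bss = [] then a else c (join_None bss))" for bss
  have "finite X"
    using finite_lists_length_le[OF finite_letters, of K]
    by (rule finite_subset[rotated]) (auto simp: X_def)
  have inj: "inj_on split_None X"
    by (rule inj_on_inverseI[where g = join_None]) (rule join_split_None)
  have nil: "[] \<notin> split_None ` X"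
    using split_None_not_Nil by (metis imageE)
  have x_comb: "x = hcomb (monomial \<iota>) (insert [] (split_None ` X)) e"
  proof (intro ext)
    fix n w
    have "hcomb (monomial \<iota>) (insert [] (split_None ` X)) e n w =
          e [] * monomial \<iota> [] n w + (\<Sum>bss\<in>split_None ` X. e bss * monomial \<iota> bss n w)"
      using \<open>finite X\<close> nil by (simp add: hcomb_def)
    also have "e [] * monomial \<iota> [] n w = a * Hunit n w"
      by (simp add: e_def monomial_def)
    also have "(\<Sum>bss\<in>split_None ` X. e bss * monomial \<iota> bss n w) =
               (\<Sum>xs\<in>X. c xs * pure_tensor \<iota> xs n w)"
      by (simp add: sum.reindex[OF inj] e_def monomial_def join_split_None split_None_not_Nil)
    finally show "x n w = hcomb (monomial \<iota>) (insert [] (split_None ` X)) e n w"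
      by (simp add: x X_def)
  qed
  have "split_None xs \<in> lists (lists (Cl - {B0}))" if "xs \<in> X" for xs
    using that by (intro split_None_in_lists) (simp add: X_def letters_def)
  then have "insert [] (split_None ` X) \<subseteq> lists (lists (Cl - {B0}))" by auto
  with \<open>finite X\<close> x_comb show "x \<in> hspan (monomial \<iota>) (lists (lists (Cl - {B0})))"
    unfolding hspan_def
    by (intro CollectI exI[of _ "insert [] (split_None ` X)"] exI[of _ e]) simp
qed

theorem H_free_algebra: "H_free_algebra G Cl \<iota>"
proof -
  let ?L = "lists (lists (Cl - {B0}))"
  define Z where "Z = generator \<iota> ` lists (Cl - {B0})"
  have words: "Hword \<iota> \<circ> map (generator \<iota>) = monomial \<iota>"
    by (simp add: fun_eq_iff Hword_map_generator)
  have inj: "inj_on (map (generator \<iota>)) ?L"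
    using hindep_inj_on[OF monomial_hindep] unfolding words[symmetric] by (rule inj_on_imageI2)
  have lists_Z: "map (generator \<iota>) ` ?L = lists Z"
    by (simp add: Z_def lists_image)
  show ?thesis
  proof (rule H_free_algebraI)
    show "Z \<subseteq> H_carrier G Cl" using generator_in_H_carrier by (auto simp: Z_def)
    show "hindep (Hword \<iota>) (lists Z)"
      using inj lists_Z monomial_hindep unfolding words[symmetric]
      by (intro hindep_reindex[where f = "map (generator \<iota>)"]) (auto simp: bij_betw_def)
    show "H_carrier G Cl \<subseteq> hspan (Hword \<iota>) (lists Z)"
      using H_carrier_subset_hspan hspan_reindex[OF inj, of "lists Z" "Hword \<iota>"] lists_Z words
      by simp
  qed
qed

end

theorem mainTheorem2:
  fixes G :: "('g, 'b) monoid_scheme" and Cl :: "'g set set" and Ch :: "('g \<Rightarrow> complex) set"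
    and \<iota> \<alpha> \<beta> :: "'g \<Rightarrow> complex"
  assumes "group G" and "finite (carrier G)"
    and "supercharacter_theory G Cl Ch"
    and "\<iota> \<in> scf G Cl" and "\<alpha> \<in> scf G Cl" and "\<beta> \<in> scf G Cl"
    and "cinner G \<iota> \<alpha> = 1" and "cinner G \<iota> \<beta> = 1"
  shows "H_free_algebra G Cl \<iota>"
proof -
  have "\<Union>Cl = carrier G" "\<forall>B\<in>Cl. B \<noteq> {}" "\<forall>B\<in>Cl. \<forall>C\<in>Cl. B \<noteq> C \<longrightarrow> B \<inter> C = {}"
    using assms(3) unfolding supercharacter_theory_def by blast+
  then have partition: "partition_on (carrier G) Cl"
    by (intro partition_onI) (auto simp: disjnt_def)
  have "(\<Sum>g\<in>carrier G. \<iota> g * cnj (\<alpha> g)) \<noteq> 0"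
    using assms(7) by (auto simp: cinner_def)
  then obtain b0 where "b0 \<in> carrier G" "\<iota> b0 * cnj (\<alpha> b0) \<noteq> 0"
    by (meson sum.neutral)
  then have b0: "b0 \<in> carrier G" "\<iota> b0 \<noteq> 0" by auto
  then obtain B0 where "B0 \<in> Cl" "b0 \<in> B0"
    using partition_onD1[OF partition] by blast
  then interpret scf_block_basis G Cl \<iota> B0 b0
    by unfold_locales (use partition assms(2,4) b0(2) in auto)
  show ?thesis by (rule H_free_algebra)
qed

end
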